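(* If a finite graph $G$ has a loop, then $H^i(G)=0$ for all $i$.
   Context: Graphs are finite; loops and multiple edges allowed. For $G=(V,E)$ and $s\subseteq E$, $[G:s]$ is the spanning subgraph with edge set $s$. With $1*1=1$, $1*x=x*1=x$, $x*x=0$: an enhanced state is $S=(s,c)$, $s\subseteq E$, $c$ assigning $1$ or $x$ to each component of $[G:s]$; $i(S)=|s|$, $j(S)=$ number of components colored $x$. $C^{i,j}(G)$ is free abelian on enhanced states with $i(S)=i,j(S)=j$; $C^i(G)=\bigoplus_jC^{i,j}(G)$. For an ordering of the edges, $d(S)=\sum_{e\in E\setminus s}(-1)^{n(e)}S_e$, $n(e)$ the number of edges of $s$ ordered before $e$; $S_e=(s\cup\{e\},c_e)$ where, if $e$ joins a component to itself, colors are unchanged, and if $e$ joins distinct components $E_1,E_2$ the merged component gets $c(E_1)*c(E_2)$ (and $S_e=0$ if this product is $0$). $H^i(G)$ is the $i$-th cohomology of $(C^\bullet(G),d)$. *)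

theory Defs
  imports Main
begin

text \<open>A finite graph (loops and multiple edges allowed) is given by a finite vertex set V,
a finite edge set E and an endpoint map ends; an edge e joins fst (ends e) and snd (ends e).  The edge ordering is given by a
function r injective on E (e' before e iff r e' < r e).\<close>

definition graph :: "'v set \<Rightarrow> 'e set \<Rightarrow> ('e \<Rightarrow> 'v \<times> 'v) \<Rightarrow> bool" where
  "graph V E ends \<longleftrightarrow> finite V \<and> finite E \<and> (\<forall>e\<in>E. fst (ends e) \<in> V \<and> snd (ends e) \<in> V)"

definition has_loop :: "'e set \<Rightarrow> ('e \<Rightarrow> 'v \<times> 'v) \<Rightarrow> bool" where
  "has_loop E ends \<longleftrightarrow> (\<exists>e\<in>E. fst (ends e) = snd (ends e))"

definition conn :: "('e \<Rightarrow> 'v \<times> 'v) \<Rightarrow> 'e set \<Rightarrow> ('v \<times> 'v) set" where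
  "conn ends s = ((ends ` s) \<union> (ends ` s)\<inverse>)\<^sup>*"

definition comps :: "'v set \<Rightarrow> ('e \<Rightarrow> 'v \<times> 'v) \<Rightarrow> 'e set \<Rightarrow> 'v set set" where
  "comps V ends s = V // conn ends s"

text \<open>Enhanced state: (s, c); colour True = x, False = 1; c is False off the components.\<close>

type_synonym ('e, 'v) state = "'e set \<times> ('v set \<Rightarrow> bool)"

definition valid_state :: "'v set \<Rightarrow> 'e set \<Rightarrow> ('e \<Rightarrow> 'v \<times> 'v) \<Rightarrow> ('e, 'v) state \<Rightarrow> bool" where
  "valid_state V E ends S \<longleftrightarrow> fst S \<subseteq> E \<and> (\<forall>K. K \<notin> comps V ends (fst S) \<longrightarrow> snd S K = False)"

text \<open>S_e (None represents 0).\<close>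

definition add_edge :: "('e \<Rightarrow> 'v \<times> 'v) \<Rightarrow> ('e, 'v) state \<Rightarrow> 'e \<Rightarrow> ('e, 'v) state option" where
  "add_edge ends S e =
    (let s = fst S; c = snd S;
         K1 = conn ends s `` {fst (ends e)}; K2 = conn ends s `` {snd (ends e)}
     in if K1 = K2 then Some (insert e s, c)
        else if c K1 \<and> c K2 then None
        else Some (insert e s, c(K1 := False, K2 := False, K1 \<union> K2 := (c K1 \<or> c K2))))"

definition sgn_exp :: "('e \<Rightarrow> nat) \<Rightarrow> 'e set \<Rightarrow> 'e \<Rightarrow> int" where
  "sgn_exp r s e = (-1) ^ card {e' \<in> s. r e' < r e}"

definition dcoef :: "'e set \<Rightarrow> ('e \<Rightarrow> 'v \<times> 'v) \<Rightarrow> ('e \<Rightarrow> nat) \<Rightarrow> ('e, 'v) state \<Rightarrow> ('e, 'v) state \<Rightarrow> int" where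
  "dcoef E ends r S T = (\<Sum>e \<in> E - fst S. if add_edge ends S e = Some T then sgn_exp r (fst S) e else 0)"

definition cochains :: "'v set \<Rightarrow> 'e set \<Rightarrow> ('e \<Rightarrow> 'v \<times> 'v) \<Rightarrow> int \<Rightarrow> (('e, 'v) state \<Rightarrow> int) set" where
  "cochains V E ends i = {f. \<forall>S. f S \<noteq> 0 \<longrightarrow> valid_state V E ends S \<and> int (card (fst S)) = i}"

definition differential :: "'v set \<Rightarrow> 'e set \<Rightarrow> ('e \<Rightarrow> 'v \<times> 'v) \<Rightarrow> ('e \<Rightarrow> nat)
    \<Rightarrow> (('e, 'v) state \<Rightarrow> int) \<Rightarrow> (('e, 'v) state \<Rightarrow> int)" where
  "differential V E ends r f = (\<lambda>T. \<Sum>S \<in> {S. valid_state V E ends S}. f S * dcoef E ends r S T)"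

text \<open>H^i(G) = 0: every i-cocycle is a coboundary (C^{-1} = 0 automatically).\<close>

definition cohomology_vanishes :: "'v set \<Rightarrow> 'e set \<Rightarrow> ('e \<Rightarrow> 'v \<times> 'v) \<Rightarrow> ('e \<Rightarrow> nat) \<Rightarrow> int \<Rightarrow> bool" where
  "cohomology_vanishes V E ends r i \<longleftrightarrow>
     (\<forall>f \<in> cochains V E ends i. differential V E ends r f = (\<lambda>_. 0) \<longrightarrow>
        (\<exists>g \<in> cochains V E ends (i - 1). differential V E ends r g = f))"

end

theory Submission
  imports Defs
begin

text \<open>A loop l never changes the connected components, so it can be added to every state
(s, c) with l \<notin> s without changing the colouring, and the enhanced states pair up as (s, c)
and (s \<union> {l}, c).  Put (h f)(s, c) = \<epsilon> f (s \<union> {l}, c) for l \<notin> s, where \<epsilon> = \<plusminus>1 is the sign with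
which d adds l to s, and h f = 0 on states containing l.  Then d h + h d = id: the terms of
d h and h d that add l reproduce f because \<epsilon> * \<epsilon> = 1, while for every other edge e, adding
first e and then l or first l and then e produces opposite signs.  Hence every cocycle f is
the coboundary d (h f).\<close>

lemma conn_insert_loop:
  assumes "fst (ends l) = snd (ends l)"
  shows "conn ends (insert l s) = conn ends s"
proof -
  obtain v where v: "ends l = (v, v)" using assms by (metis prod.collapse)
  have "ends ` insert l s \<union> (ends ` insert l s)\<inverse> = insert (v, v) (ends ` s \<union> (ends ` s)\<inverse>)"
    using v by auto
  then show ?thesis unfolding conn_def by (auto simp: rtrancl_insert)
qed

lemma add_edge_loop:
  assumes "fst (ends l) = snd (ends l)"
  shows "add_edge ends (s, c) l = Some (insert l s, c)"
  using assms unfolding add_edge_def Let_def by simp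

lemma fst_add_edge:
  "add_edge ends S e = Some T \<Longrightarrow> fst T = insert e (fst S)"
  unfolding add_edge_def Let_def by (auto split: if_splits)

lemma add_edge_insert_loop:
  assumes "fst (ends l) = snd (ends l)"
  shows "add_edge ends (insert l s, c) e
       = map_option (\<lambda>T. (insert l (fst T), snd T)) (add_edge ends (s, c) e)"
  using assms unfolding add_edge_def Let_def by (simp add: conn_insert_loop insert_commute)

lemma add_edge_insert_loop_eq_Some_iff:
  assumes "fst (ends l) = snd (ends l)" and "l \<notin> s" "l \<notin> t" "e \<noteq> l"
  shows "add_edge ends (insert l s, c) e = Some (insert l t, c')
     \<longleftrightarrow> add_edge ends (s, c) e = Some (t, c')"
proof -
  have "insert l (fst T) = insert l t \<longleftrightarrow> fst T = t" if "add_edge ends (s, c) e = Some T" for T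
    using fst_add_edge[OF that] assms by (auto simp: insert_ident)
  then show ?thesis
    unfolding add_edge_insert_loop[of ends l, OF assms(1)] by (cases "add_edge ends (s, c) e") auto
qed

lemma valid_state_insert_loop:
  assumes "fst (ends l) = snd (ends l)" and "l \<in> E"
  shows "valid_state V E ends (insert l s, c) \<longleftrightarrow> valid_state V E ends (s, c)"
  using assms unfolding valid_state_def comps_def by (auto simp: conn_insert_loop)

lemma sgn_exp_insert:
  assumes "finite s" "a \<notin> s"
  shows "sgn_exp r (insert a s) e = (if r a < r e then -1 else 1) * sgn_exp r s e"
proof -
  have "{e' \<in> insert a s. r e' < r e}
      = (if r a < r e then insert a {e' \<in> s. r e' < r e} else {e' \<in> s. r e' < r e})"
    by auto
  then show ?thesis using assms unfolding sgn_exp_def by auto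
qed

lemma sgn_exp_square: "sgn_exp r s e * sgn_exp r s e = 1"
  unfolding sgn_exp_def by (simp flip: power_add power_mult_distrib)

lemma sgn_exp_swap:
  assumes "finite s" "a \<notin> s" "b \<notin> s" "r a \<noteq> r b"
  shows "sgn_exp r (insert a s) b * sgn_exp r (insert b s) a = - (sgn_exp r s b * sgn_exp r s a)"
  using assms by (auto simp: sgn_exp_insert)

lemma finite_valid_states:
  assumes "finite V" "finite E"
  shows "finite {S. valid_state V E ends S}"
proof -
  let ?colouring = "\<lambda>(s, X). (s, \<lambda>K. K \<in> X)"
  have "finite (comps V ends s)" for s
    unfolding comps_def quotient_def using assms by auto
  then have "finite (SIGMA s:Pow E. Pow (comps V ends s))"
    using assms by auto
  moreover have "{S. valid_state V E ends S} \<subseteq> ?colouring ` (SIGMA s:Pow E. Pow (comps V ends s))"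
  proof
    fix S assume "S \<in> {S. valid_state V E ends S}"
    then obtain s c where S: "S = (s, c)" "s \<subseteq> E" "\<forall>K. K \<notin> comps V ends s \<longrightarrow> \<not> c K"
      unfolding valid_state_def by (cases S) auto
    then have "S = ?colouring (s, {K. c K})" "(s, {K. c K}) \<in> (SIGMA s:Pow E. Pow (comps V ends s))"
      by auto
    then show "S \<in> ?colouring ` (SIGMA s:Pow E. Pow (comps V ends s))" by blast
  qed
  ultimately show ?thesis by (meson finite_imageI finite_subset)
qed

lemma dcoef_single_edge:
  assumes "finite E" "e \<in> E" "e \<notin> fst S" "e \<in> fst T"
  shows "dcoef E ends r S T = (if add_edge ends S e = Some T then sgn_exp r (fst S) e else 0)"
proof -
  let ?term = "\<lambda>e'. if add_edge ends S e' = Some T then sgn_exp r (fst S) e' else 0"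
  have term_eq: "?term e' = (if e' = e then ?term e else 0)" for e'
    using fst_add_edge[of ends S e' T] assms by auto
  then have "dcoef E ends r S T = (\<Sum>e' \<in> E - fst S. if e' = e then ?term e else 0)"
    unfolding dcoef_def by (intro sum.cong refl term_eq)
  then show ?thesis
    using assms by simp
qed

locale graph_with_loop =
  fixes V :: "'v set" and E :: "'e set" and ends :: "'e \<Rightarrow> 'v \<times> 'v" and r :: "'e \<Rightarrow> nat"
    and l :: 'e
  assumes finite_V: "finite V" and finite_E: "finite E" and inj_r: "inj_on r E"
    and loop_in_E: "l \<in> E" and loop: "fst (ends l) = snd (ends l)"
begin

abbreviation valid :: "('e, 'v) state \<Rightarrow> bool" where
  "valid \<equiv> valid_state V E ends"

abbreviation coef :: "('e, 'v) state \<Rightarrow> ('e, 'v) state \<Rightarrow> int" where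
  "coef \<equiv> dcoef E ends r"

abbreviation \<delta> :: "(('e, 'v) state \<Rightarrow> int) \<Rightarrow> ('e, 'v) state \<Rightarrow> int" where
  "\<delta> \<equiv> differential V E ends r"

definition add_loop :: "('e, 'v) state \<Rightarrow> ('e, 'v) state" where
  "add_loop S = (insert l (fst S), snd S)"

definition loop_free_states :: "('e, 'v) state set" where
  "loop_free_states = {S. valid S \<and> l \<notin> fst S}"

definition contraction :: "(('e, 'v) state \<Rightarrow> int) \<Rightarrow> ('e, 'v) state \<Rightarrow> int" where
  "contraction f S = (if l \<in> fst S then 0 else sgn_exp r (fst S) l * f (add_loop S))"

lemma valid_add_loop [simp]: "valid (add_loop S) \<longleftrightarrow> valid S"
  by (cases S) (simp add: add_loop_def valid_state_insert_loop[of ends l, OF loop loop_in_E])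

lemma add_loop_eq_iff:
  assumes "l \<notin> fst S" "l \<notin> fst T"
  shows "add_loop S = add_loop T \<longleftrightarrow> S = T"
  using assms by (auto simp: add_loop_def prod_eq_iff insert_ident)

lemma finite_loop_free_states: "finite loop_free_states"
  using finite_valid_states[OF finite_V finite_E] unfolding loop_free_states_def by simp

lemma sum_valid_states_split:
  "(\<Sum>S \<in> {S. valid S}. F S) = (\<Sum>S \<in> loop_free_states. F S + F (add_loop S))"
proof -
  have "S \<in> loop_free_states \<union> add_loop ` loop_free_states" if "valid S" for S
  proof (cases "l \<in> fst S")
    case True
    then have "S = add_loop (fst S - {l}, snd S)"
      by (simp add: add_loop_def insert_absorb)
    moreover have "(fst S - {l}, snd S) \<in> loop_free_states"
      using \<open>valid S\<close> valid_add_loop[of "(fst S - {l}, snd S)"] calculation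
      unfolding loop_free_states_def by simp
    ultimately show ?thesis by blast
  qed (use that loop_free_states_def in auto)
  then have split: "{S. valid S} = loop_free_states \<union> add_loop ` loop_free_states"
    unfolding loop_free_states_def by auto
  have "loop_free_states \<inter> add_loop ` loop_free_states = {}"
    unfolding loop_free_states_def add_loop_def by auto
  moreover have "inj_on add_loop loop_free_states"
    unfolding loop_free_states_def by (auto intro: inj_onI simp: add_loop_eq_iff)
  ultimately show ?thesis
    unfolding split using finite_loop_free_states
    by (simp add: sum.union_disjoint sum.reindex sum.distrib)
qed

lemma dcoef_to_loop_state:
  assumes "l \<notin> fst S" "l \<in> fst T"
  shows "coef S T = (if add_loop S = T then sgn_exp r (fst S) l else 0)"
  using dcoef_single_edge[OF finite_E loop_in_E assms] add_edge_loop[of ends l, OF loop]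
  by (cases S) (auto simp: add_loop_def)

lemma dcoef_to_add_loop:
  assumes "l \<notin> fst S" "l \<notin> fst T"
  shows "coef S (add_loop T) = (if S = T then sgn_exp r (fst S) l else 0)"
proof -
  have "l \<in> fst (add_loop T)" by (simp add: add_loop_def)
  then show ?thesis
    using dcoef_to_loop_state[of S "add_loop T"] assms by (simp add: add_loop_eq_iff)
qed

lemma dcoef_add_loop_anticommute:
  assumes "fst S \<subseteq> E" "l \<notin> fst S" "l \<notin> fst T"
  shows "sgn_exp r (fst T) l * coef (add_loop S) (add_loop T) = - (sgn_exp r (fst S) l * coef S T)"
proof -
  obtain s c t c' where ST: "S = (s, c)" "T = (t, c')" by fastforce
  have s: "finite s" "s \<subseteq> E" "l \<notin> s" and t: "l \<notin> t"
    using assms ST finite_E by (auto intro: finite_subset)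
  let ?term = "\<lambda>S T e. if add_edge ends S e = Some T then sgn_exp r (fst S) e else 0"
  have "add_edge ends (s, c) l \<noteq> Some (t, c')"
    using add_edge_loop[of ends l, OF loop] t by auto
  moreover have "coef S T = ?term (s, c) (t, c') l + (\<Sum>e \<in> E - s - {l}. ?term (s, c) (t, c') e)"
    unfolding dcoef_def ST fst_conv using finite_E loop_in_E s by (intro sum.remove) auto
  moreover have "E - s - {l} = E - insert l s" by blast
  ultimately have coef_ST: "coef S T = (\<Sum>e \<in> E - insert l s. ?term (s, c) (t, c') e)"
    by simp
  have termwise: "sgn_exp r t l * ?term (insert l s, c) (insert l t, c') e
      = - (sgn_exp r s l * ?term (s, c) (t, c') e)"
    if e: "e \<in> E - insert l s" for e
  proof (cases "add_edge ends (s, c) e = Some (t, c')")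
    case True
    have "t = insert e s" using fst_add_edge[OF True] by simp
    moreover have "r e \<noteq> r l" using inj_onD[OF inj_r _ _ loop_in_E] e by blast
    ultimately show ?thesis
      using True e s t sgn_exp_swap[of s e l r]
      by (simp add: add_edge_insert_loop_eq_Some_iff[of ends l, OF loop])
  next
    case False
    then show ?thesis
      using e s t by (simp add: add_edge_insert_loop_eq_Some_iff[of ends l, OF loop])
  qed
  have "sgn_exp r (fst T) l * coef (add_loop S) (add_loop T)
      = (\<Sum>e \<in> E - insert l s. sgn_exp r t l * ?term (insert l s, c) (insert l t, c') e)"
    unfolding dcoef_def ST add_loop_def fst_conv snd_conv by (simp add: sum_distrib_left)
  also have "\<dots> = (\<Sum>e \<in> E - insert l s. - (sgn_exp r s l * ?term (s, c) (t, c') e))"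
    using termwise by (rule sum.cong[OF refl])
  also have "\<dots> = - (sgn_exp r (fst S) l * coef S T)"
    unfolding coef_ST unfolding ST by (simp add: sum_distrib_left sum_negf)
  finally show ?thesis .
qed

lemma differential_contraction:
  "\<delta> (contraction f) T = (\<Sum>S \<in> loop_free_states. sgn_exp r (fst S) l * f (add_loop S) * coef S T)"
  unfolding differential_def sum_valid_states_split
  by (intro sum.cong refl) (simp add: contraction_def add_loop_def loop_free_states_def)

lemma contraction_cochains:
  assumes "f \<in> cochains V E ends i"
  shows "contraction f \<in> cochains V E ends (i - 1)"
  unfolding cochains_def
proof (intro CollectI allI impI)
  fix S assume "contraction f S \<noteq> 0"
  then have l: "l \<notin> fst S" and "f (add_loop S) \<noteq> 0"
    by (auto simp: contraction_def split: if_splits)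
  then have "valid (add_loop S)" "int (card (fst (add_loop S))) = i"
    using assms unfolding cochains_def by blast+
  then have "valid S" "int (card (insert l (fst S))) = i"
    by (simp_all only: valid_add_loop) (simp add: add_loop_def)
  moreover have "finite (fst S)"
    using \<open>valid S\<close> finite_E unfolding valid_state_def by (auto intro: finite_subset)
  ultimately show "valid S \<and> int (card (fst S)) = i - 1"
    using l by simp
qed

lemma contraction_homotopy_loop_state:
  assumes supp: "\<And>S. f S \<noteq> 0 \<Longrightarrow> valid S" and T: "l \<in> fst T"
  shows "\<delta> (contraction f) T = f T"
proof -
  let ?S\<^sub>0 = "(fst T - {l}, snd T)"
  have "sgn_exp r (fst S) l * f (add_loop S) * coef S T = (if S = ?S\<^sub>0 then f T else 0)"
    if "S \<in> loop_free_states" for S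
  proof -
    have l: "l \<notin> fst S" using that unfolding loop_free_states_def by simp
    have "add_loop S = T \<longleftrightarrow> S = ?S\<^sub>0"
      using l T by (auto simp: add_loop_def prod_eq_iff insert_absorb)
    then show ?thesis
      using dcoef_to_loop_state[OF l T] sgn_exp_square[of r "fst S" l] by auto
  qed
  then have "\<delta> (contraction f) T = (\<Sum>S \<in> loop_free_states. if S = ?S\<^sub>0 then f T else 0)"
    unfolding differential_contraction by (rule sum.cong[OF refl])
  also have "\<dots> = (if ?S\<^sub>0 \<in> loop_free_states then f T else 0)"
    using finite_loop_free_states by simp
  also have "\<dots> = f T"
  proof -
    have "add_loop ?S\<^sub>0 = T" using T by (simp add: add_loop_def insert_absorb)
    then have "?S\<^sub>0 \<in> loop_free_states \<longleftrightarrow> valid T"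
      unfolding loop_free_states_def using valid_add_loop[of ?S\<^sub>0] by auto
    then show ?thesis using supp[of T] by auto
  qed
  finally show ?thesis .
qed

lemma contraction_homotopy_loop_free_state:
  assumes supp: "\<And>S. f S \<noteq> 0 \<Longrightarrow> valid S" and T: "l \<notin> fst T"
  shows "\<delta> (contraction f) T + contraction (\<delta> f) T = f T"
proof -
  let ?\<epsilon> = "sgn_exp r (fst T) l"
  have "\<delta> f (add_loop T) = (\<Sum>S \<in> loop_free_states. f S * coef S (add_loop T))
      + (\<Sum>S \<in> loop_free_states. f (add_loop S) * coef (add_loop S) (add_loop T))"
    unfolding differential_def sum_valid_states_split by (simp add: sum.distrib)
  moreover have "(\<Sum>S \<in> loop_free_states. f S * coef S (add_loop T)) = f T * ?\<epsilon>"
  proof -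
    have "(\<Sum>S \<in> loop_free_states. f S * coef S (add_loop T))
        = (\<Sum>S \<in> loop_free_states. if S = T then f T * ?\<epsilon> else 0)"
      using T dcoef_to_add_loop by (intro sum.cong refl) (auto simp: loop_free_states_def)
    also have "\<dots> = f T * ?\<epsilon>"
      using finite_loop_free_states supp[of T] T by (auto simp: loop_free_states_def)
    finally show ?thesis .
  qed
  moreover have "?\<epsilon> * (\<Sum>S \<in> loop_free_states. f (add_loop S) * coef (add_loop S) (add_loop T))
      = - \<delta> (contraction f) T"
  proof -
    have "?\<epsilon> * (f (add_loop S) * coef (add_loop S) (add_loop T))
        = - (sgn_exp r (fst S) l * f (add_loop S) * coef S T)" if "S \<in> loop_free_states" for S
      using dcoef_add_loop_anticommute[of S T] that T
      unfolding loop_free_states_def valid_state_def by (simp add: algebra_simps)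
    then show ?thesis
      unfolding differential_contraction sum_distrib_left
      by (simp add: sum_negf[symmetric] cong: sum.cong)
  qed
  ultimately show ?thesis
    using T sgn_exp_square[of r "fst T" l] by (simp add: contraction_def distrib_left)
qed

lemma contraction_homotopy:
  assumes "\<And>S. f S \<noteq> 0 \<Longrightarrow> valid S"
  shows "\<delta> (contraction f) T + contraction (\<delta> f) T = f T"
  using contraction_homotopy_loop_state[OF assms] contraction_homotopy_loop_free_state[OF assms]
  by (cases "l \<in> fst T") (simp_all add: contraction_def)

lemma cocycle_is_coboundary:
  assumes "f \<in> cochains V E ends i" and "\<delta> f = (\<lambda>_. 0)"
  shows "\<delta> (contraction f) = f"
proof
  fix T
  have "\<And>S. f S \<noteq> 0 \<Longrightarrow> valid S" using assms(1) unfolding cochains_def by blast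
  moreover have "contraction (\<delta> f) T = 0" using assms(2) by (simp add: contraction_def)
  ultimately show "\<delta> (contraction f) T = f T"
    using contraction_homotopy[of f T] by simp
qed

end

theorem mainTheorem6:
  fixes V :: "'v set" and E :: "'e set" and ends :: "'e \<Rightarrow> 'v \<times> 'v" and r :: "'e \<Rightarrow> nat"
  assumes "graph V E ends"
    and "inj_on r E"
    and "has_loop E ends"
  shows "\<forall>i. cohomology_vanishes V E ends r i"
proof -
  obtain l where "l \<in> E" "fst (ends l) = snd (ends l)"
    using assms(3) unfolding has_loop_def by blast
  then interpret graph_with_loop V E ends r l
    using assms(1,2) unfolding graph_def by unfold_locales auto
  show ?thesis
    unfolding cohomology_vanishes_def
    using contraction_cochains cocycle_is_coboundary by blast
qed

end
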